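(* Let $\Xi$ be an admissible Gibbs process with activity $\lambda<\lambda_c(d)$. For $p\in\mathbb{N}$ and disjoint $\Psi_1,\dots,\Psi_p\in\mathcal{B}_b(\mathcal{C}^{(d)})$, \[ \mathbb{E}\Bigl(\prod_{i=1}^p\Xi(\Psi_i)\Bigr)\le\lambda^p\prod_{i=1}^p\mu(\Psi_i). \]
   Context: $\mathcal{C}^{(d)}$: nonempty compact subsets of $\mathbb{R}^d$ with Hausdorff metric $d_H$; $z(K)$ centre of the circumscribed ball of $K$. $\mathbf{N}$: $\mathbb{N}_0\cup\{\infty\}$-valued measures on $\mathcal{C}^{(d)}$ finite on $d_H$-balls; particle processes are random elements of $\mathbf{N}$, assumed simple, stationary, a.s. nonzero. $\mathcal{B}_b(\mathcal{C}^{(d)}):=\{z^{-1}(B):B\subseteq\mathbb{R}^d\text{ bounded Borel}\}$. $\xi^{(m)}$: $m$-th factorial measure. $\mathbb{Q}$: probability measure with $z(K)=\mathbf 0$ and $K\subseteq B(\mathbf 0,R)$ $\mathbb{Q}$-a.s. ($R>0$ fixed); $\mu:=\iint\mathbf 1\{K+x\in\cdot\}\mathbb{Q}(dK)dx$; $\Pi_{\lambda\mu}$ Poisson process with intensity $\lambda\mu$. Admissible Gibbs process: potentials $\varphi_n:(\mathcal{C}^{(d)})^n\to(-\infty,\infty]$, $n\ge2$, measurable, symmetric, translation invariant, zero when $\max_{i<j}d_H(K_i,K_j)>R_\varphi$; $\kappa(K,\xi)=0$ if $K\in\operatorname{supp}\xi$, else $\kappa(K,\xi)=\exp[-\sum_{n\ge2}\frac1{(n-1)!}\int\varphi_n(K,L_1,\ldots,L_{n-1})\xi^{(n-1)}(d(L_1,\ldots,L_{n-1}))]$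 (series set to $0$ if its negative part diverges, assumed not to happen), $\kappa\le1$; $\Xi$ satisfies $\mathbb{E}\int f(K,\Xi-\delta_K)\Xi(dK)=\lambda\mathbb{E}\int f(K,\Xi)\kappa(K,\Xi)\mu(dK)$ for all measurable $f\ge0$. $\lambda_c(d)$: critical intensity for percolation of $\Pi_{\lambda\mu}$ (infinite component of the graph on the support with edges between intersecting particles). *)

theory Defs
  imports "HOL-Probability.Probability"
begin

definition Cd :: "'a::euclidean_space set set" where
  "Cd = {K. compact K \<and> K \<noteq> {}}"

definition hdist :: "'a::euclidean_space set \<Rightarrow> 'a set \<Rightarrow> real" where
  "hdist K L = max (SUP x\<in>K. infdist x L) (SUP y\<in>L. infdist y K)"

definition Cmeas :: "'a::euclidean_space set measure" where
  "Cmeas = sigma Cd {U. U \<subseteq> Cd \<and>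
      (\<forall>K\<in>U. \<exists>e>0. \<forall>L\<in>Cd. hdist K L < e \<longrightarrow> L \<in> U)}"

definition crad :: "'a::euclidean_space set \<Rightarrow> real" where
  "crad K = Inf {r. \<exists>x. K \<subseteq> cball x r}"

definition zc :: "'a::euclidean_space set \<Rightarrow> 'a" where
  "zc K = (THE x. K \<subseteq> cball x (crad K))"

definition translate :: "'a::euclidean_space \<Rightarrow> 'a set \<Rightarrow> 'a set" where
  "translate x K = (\<lambda>y. y + x) ` K"

definition Bb :: "'a::euclidean_space set set set" where
  "Bb = {{K\<in>Cd. zc K \<in> B} | B. B \<in> sets borel \<and> bounded B}"

text \<open>A simple N_0-valued measure on C^(d), finite on hdist-balls, is identified with
  its support: a subset of Cd having finitely many elements in every hdist-ball.\<close>
definition Nspace :: "'a::euclidean_space set set set" where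
  "Nspace = {S. S \<subseteq> Cd \<and> (\<forall>K\<in>Cd. \<forall>r. finite {L\<in>S. hdist K L \<le> r})}"

definition cnt :: "'a set set \<Rightarrow> 'a set set \<Rightarrow> ennreal" where
  "cnt S B = (if finite (S \<inter> B) then of_nat (card (S \<inter> B)) else \<infinity>)"

definition Nmeas :: "'a::euclidean_space set set measure" where
  "Nmeas = sigma Nspace {{S\<in>Nspace. cnt S B = of_nat k} | B k. B \<in> sets Cmeas}"

definition shiftN :: "'a::euclidean_space \<Rightarrow> 'a set set \<Rightarrow> 'a set set" where
  "shiftN x S = translate x ` S"

definition particle_process :: "'w measure \<Rightarrow> ('w \<Rightarrow> 'a::euclidean_space set set) \<Rightarrow> bool" where
  "particle_process M \<Xi> \<longleftrightarrow> prob_space M \<and> \<Xi> \<in> measurable M Nmeas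
     \<and> (\<forall>x. distr M Nmeas (\<lambda>\<omega>. shiftN x (\<Xi> \<omega>)) = distr M Nmeas \<Xi>)
     \<and> (AE \<omega> in M. \<Xi> \<omega> \<noteq> {})"

definition grain_dist :: "real \<Rightarrow> 'a::euclidean_space set measure \<Rightarrow> bool" where
  "grain_dist R Q \<longleftrightarrow> R > 0 \<and> prob_space Q \<and> sets Q = sets Cmeas
     \<and> (AE K in Q. zc K = 0 \<and> K \<subseteq> cball 0 R)"

definition muQ :: "'a::euclidean_space set measure \<Rightarrow> 'a set measure" where
  "muQ Q = measure_of Cd (sets Cmeas)
     (\<lambda>A. \<integral>\<^sup>+ x. (\<integral>\<^sup>+ K. indicator A (translate x K) \<partial>Q) \<partial>lborel)"

text \<open>Potentials: phi n is applied to lists of length n.\<close>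
definition admissible_potentials ::
  "(nat \<Rightarrow> 'a::euclidean_space set list \<Rightarrow> ereal) \<Rightarrow> real \<Rightarrow> bool" where
  "admissible_potentials \<phi> R\<phi> \<longleftrightarrow>
     (\<forall>n\<ge>2. (\<lambda>v. \<phi> n (map v [0..<n])) \<in> borel_measurable (PiM {..<n} (\<lambda>_. Cmeas))
       \<and> (\<forall>xs. length xs = n \<longrightarrow> \<phi> n xs \<noteq> -\<infinity>)
       \<and> (\<forall>xs ys. length xs = n \<longrightarrow> mset xs = mset ys \<longrightarrow> \<phi> n xs = \<phi> n ys)
       \<and> (\<forall>xs x. length xs = n \<longrightarrow> \<phi> n (map (translate x) xs) = \<phi> n xs)
       \<and> (\<forall>xs. length xs = n \<longrightarrow>
            (\<exists>i<n. \<exists>j<n. i < j \<and> hdist (xs!i) (xs!j) > R\<phi>) \<longrightarrow> \<phi> n xs = 0))"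

text \<open>Factorial measure xi^(n-1) of a simple xi: sum over tuples of pairwise distinct
  points of the support. Only the (finitely many, for admissible potentials and
  locally finite S) nonzero terms are summed.\<close>
definition energy_term ::
  "(nat \<Rightarrow> 'a set list \<Rightarrow> ereal) \<Rightarrow> nat \<Rightarrow> 'a set \<Rightarrow> 'a set set \<Rightarrow> ereal" where
  "energy_term \<phi> n K S = ereal (1 / fact (n - 1)) *
     (\<Sum>ls\<in>{ls. length ls = n - 1 \<and> distinct ls \<and> set ls \<subseteq> S \<and> \<phi> n (K # ls) \<noteq> 0}.
        \<phi> n (K # ls))"

definition energy :: "(nat \<Rightarrow> 'a set list \<Rightarrow> ereal) \<Rightarrow> 'a set \<Rightarrow> 'a set set \<Rightarrow> ereal" where
  "energy \<phi> K S = (\<Sum>n\<in>{n. 2 \<le> n \<and> energy_term \<phi> n K S \<noteq> 0}. energy_term \<phi> n K S)"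

definition kappa :: "(nat \<Rightarrow> 'a set list \<Rightarrow> ereal) \<Rightarrow> 'a set \<Rightarrow> 'a set set \<Rightarrow> ennreal" where
  "kappa \<phi> K S = (if K \<in> S then 0 else
     (case energy \<phi> K S of ereal r \<Rightarrow> ennreal (exp (- r)) | PInfty \<Rightarrow> 0 | MInfty \<Rightarrow> 1))"

definition admissible_gibbs ::
  "'w measure \<Rightarrow> ('w \<Rightarrow> 'a::euclidean_space set set) \<Rightarrow> real \<Rightarrow>
   (nat \<Rightarrow> 'a set list \<Rightarrow> ereal) \<Rightarrow> real \<Rightarrow> real \<Rightarrow> 'a set measure \<Rightarrow> bool" where
  "admissible_gibbs M \<Xi> lam \<phi> R\<phi> R Q \<longleftrightarrow>
     particle_process M \<Xi> \<and> lam > 0 \<and> grain_dist R Q \<and> admissible_potentials \<phi> R\<phi>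
     \<and> (\<forall>K\<in>Cd. \<forall>S\<in>Nspace. kappa \<phi> K S \<le> 1)
     \<and> (\<forall>f \<in> borel_measurable (Cmeas \<Otimes>\<^sub>M Nmeas).
          (\<integral>\<^sup>+\<omega>. (\<integral>\<^sup>+K. f (K, \<Xi> \<omega> - {K}) \<partial>count_space (\<Xi> \<omega>)) \<partial>M)
          = ennreal lam * (\<integral>\<^sup>+\<omega>. (\<integral>\<^sup>+K. f (K, \<Xi> \<omega>) * kappa \<phi> K (\<Xi> \<omega>) \<partial>muQ Q) \<partial>M))"

definition poisson_law :: "('a::euclidean_space set set \<Rightarrow> ennreal) \<Rightarrow> 'a set set measure \<Rightarrow> bool" where
  "poisson_law \<nu> P \<longleftrightarrow> prob_space P \<and> sets P = sets Nmeas
     \<and> (\<forall>B\<in>sets Cmeas. \<nu> B < \<infinity> \<longrightarrow> (\<forall>k::nat.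
          measure P {S\<in>Nspace. cnt S B = of_nat k}
            = exp (- enn2real (\<nu> B)) * enn2real (\<nu> B) ^ k / fact k))
     \<and> (\<forall>B\<in>sets Cmeas. \<nu> B = \<infinity> \<longrightarrow> (AE S in P. cnt S B = \<infinity>))
     \<and> (\<forall>(n::nat) Bs. (\<forall>i<n. Bs i \<in> sets Cmeas) \<longrightarrow> disjoint_family_on Bs {..<n} \<longrightarrow>
          prob_space.indep_vars P (\<lambda>_. borel) (\<lambda>i S. cnt S (Bs i)) {..<n})"

definition percolates :: "'a set set \<Rightarrow> bool" where
  "percolates S \<longleftrightarrow> (\<exists>K\<in>S. infinite
     {L\<in>S. (K, L) \<in> {(A, B). A \<in> S \<and> B \<in> S \<and> A \<noteq> B \<and> A \<inter> B \<noteq> {}}\<^sup>*})"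

definition lambda_c :: "'a::euclidean_space set measure \<Rightarrow> ereal" where
  "lambda_c Q = Inf (ereal ` {lam. lam \<ge> 0 \<and> (\<exists>P. poisson_law (\<lambda>B. ennreal lam * emeasure (muQ Q) B) P
        \<and> emeasure P {S\<in>Nspace. percolates S} > 0)})"

end

theory Submission
  imports Defs
begin

text \<open>Induction on \<open>p\<close> via the GNZ equation, applied to
  \<open>f(K, S) = 1[K \<in> \<Psi>\<^sub>p] \<Prod>\<^bsub>i<p\<^esub> S(\<Psi>\<^sub>i)\<close>. Since the \<open>\<Psi>\<^sub>i\<close> are disjoint, removing a particle
  \<open>K \<in> \<Psi>\<^sub>p\<close> leaves the other counts unchanged, so the left-hand side of the GNZ equation
  is the \<open>p\<close>-th moment; on the right-hand side \<open>\<kappa> \<le> 1\<close> bounds it by \<open>\<lambda> \<mu>(\<Psi>\<^sub>p)\<close> times the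
  \<open>(p-1)\<close>-th moment. The only geometric input
  is that sets in \<open>B\<^sub>b\<close> are measurable, i.e. that the circumcentre is continuous for
  the Hausdorff distance; by the parallelogram law a set lying in two balls lies in a
  smaller ball around their midpoint, which gives
  \<open>|z(K) - z(L)|\<^sup>2 \<le> 8 d\<^sub>H(K,L) (r(K) + d\<^sub>H(K,L))\<close> for the circumradius \<open>r\<close>.\<close>

lemma bdd_below_enclosing_radii: "K \<noteq> {} \<Longrightarrow> bdd_below {r. \<exists>x. K \<subseteq> cball x r}"
  unfolding bdd_below_def
  by (rule exI[of _ 0]) (auto simp: subset_iff intro: order_trans[OF zero_le_dist])

lemma crad_le: "K \<noteq> {} \<Longrightarrow> K \<subseteq> cball x r \<Longrightarrow> crad K \<le> r"
  unfolding crad_def by (rule cInf_lower) (auto intro: bdd_below_enclosing_radii)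

lemma Cd_subset_cball: "K \<in> Cd \<Longrightarrow> \<exists>x r. K \<subseteq> cball x r"
  unfolding Cd_def using compact_imp_bounded bounded_subset_cball by blast

lemma crad_nonneg: "K \<in> Cd \<Longrightarrow> 0 \<le> crad K"
  unfolding crad_def
proof (rule cInf_greatest)
  assume "K \<in> Cd"
  then show "{r. \<exists>x. K \<subseteq> cball x r} \<noteq> {}" using Cd_subset_cball by blast
  fix r assume "r \<in> {r. \<exists>x. K \<subseteq> cball x r}"
  then obtain x where "K \<subseteq> cball x r" by auto
  moreover obtain k where "k \<in> K" using \<open>K \<in> Cd\<close> unfolding Cd_def by auto
  ultimately show "0 \<le> r" by (auto simp: subset_iff intro: order_trans[OF zero_le_dist])
qed

lemma crad_less_imp_subset_cball: "K \<in> Cd \<Longrightarrow> crad K < s \<Longrightarrow> \<exists>x r. r < s \<and> K \<subseteq> cball x r"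
  unfolding crad_def using Cd_subset_cball
  by (subst (asm) cInf_less_iff) (auto intro: bdd_below_enclosing_radii simp: Cd_def)

lemma dist_midpoint_sq:
  fixes a b y :: "'a::euclidean_space"
  shows "dist (midpoint a b) y ^ 2 = (dist a y ^ 2 + dist b y ^ 2) / 2 - dist a b ^ 2 / 4"
  unfolding midpoint_def dist_norm power2_norm_eq_inner
  by (simp add: inner_simps inner_commute field_simps)

lemma crad_sq_le_midpoint:
  fixes K :: "'a::euclidean_space set"
  assumes K: "K \<in> Cd" and a: "K \<subseteq> cball a s" and b: "K \<subseteq> cball b t"
  shows "crad K ^ 2 \<le> (s^2 + t^2) / 2 - dist a b ^ 2 / 4"
proof -
  let ?X = "(s^2 + t^2) / 2 - dist a b ^ 2 / 4"
  have le: "dist (midpoint a b) y ^ 2 \<le> ?X" if "y \<in> K" for y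
  proof -
    have "dist a y \<le> s" "dist b y \<le> t" using that a b by auto
    then have "dist a y ^ 2 \<le> s^2" "dist b y ^ 2 \<le> t^2"
      by (auto intro: power_mono)
    then show ?thesis unfolding dist_midpoint_sq by simp
  qed
  have "K \<subseteq> cball (midpoint a b) (sqrt ?X)"
    using le by (auto simp: subset_iff intro!: real_le_rsqrt)
  then have c: "crad K \<le> sqrt ?X" using K crad_le unfolding Cd_def by blast
  obtain k where "k \<in> K" using K unfolding Cd_def by auto
  then have X0: "0 \<le> ?X" using le[of k] by (smt (verit) zero_le_power2)
  have "crad K ^ 2 \<le> sqrt ?X ^ 2"
    using c crad_nonneg[OF K] by (rule power_mono)
  also have "\<dots> = ?X" using X0 by simp
  finally show ?thesis .
qed

lemma ex_subset_cball_crad: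
  fixes K :: "'a::euclidean_space set"
  assumes K: "K \<in> Cd"
  shows "\<exists>x. K \<subseteq> cball x (crad K)"
proof -
  obtain k0 where k0: "k0 \<in> K" using K unfolding Cd_def by auto
  define centres where "centres s = (\<Inter>y\<in>K. cball y s)" for s
  \<comment> \<open>the centres of enclosing balls of radius \<open>s\<close>: closed, nested, and nonempty for
    \<open>s > crad K\<close>, so compactness gives a centre common to all of them\<close>
  have "cball k0 (crad K + 1) \<inter> (\<Inter>s\<in>{crad K<..}. centres s) \<noteq> {}"
  proof (rule compact_imp_fip_image)
    show "compact (cball k0 (crad K + 1))" by simp
    show "closed (centres s)" for s unfolding centres_def by (auto intro: closed_INT)
    fix I assume I: "finite I" "I \<subseteq> {crad K<..}"
    define m where "m = Min (insert (crad K + 1) I)"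
    have "crad K < m" unfolding m_def using I by auto
    then obtain x r where xr: "r < m" "K \<subseteq> cball x r"
      using crad_less_imp_subset_cball[OF K] by blast
    have r: "r \<le> crad K + 1" "\<forall>s\<in>I. r \<le> s" using xr(1) I(1) unfolding m_def by auto
    have "dist k0 x \<le> r" using xr(2) k0 by (auto simp: dist_commute)
    moreover have "x \<in> centres s" if "s \<in> I" for s
      using xr(2) r(2) that unfolding centres_def
      by (auto simp: subset_iff dist_commute intro: order_trans)
    ultimately have "x \<in> cball k0 (crad K + 1) \<inter> (\<Inter>s\<in>I. centres s)" using r(1) by auto
    then show "cball k0 (crad K + 1) \<inter> (\<Inter>s\<in>I. centres s) \<noteq> {}" by blast
  qed
  then obtain x where x: "\<And>s. s > crad K \<Longrightarrow> x \<in> centres s" by auto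
  have "K \<subseteq> cball x (crad K)"
  proof
    fix y assume y: "y \<in> K"
    have "dist x y \<le> crad K + e" if "e > 0" for e
      using x[of "crad K + e"] that y unfolding centres_def by (auto simp: dist_commute)
    then show "y \<in> cball x (crad K)" by (auto intro: field_le_epsilon)
  qed
  then show ?thesis by blast
qed

lemma subset_cball_zc:
  fixes K :: "'a::euclidean_space set"
  assumes K: "K \<in> Cd"
  shows "K \<subseteq> cball (zc K) (crad K)"
proof -
  obtain x where x: "K \<subseteq> cball x (crad K)" using ex_subset_cball_crad[OF K] by blast
  have unique: "a = b" if "K \<subseteq> cball a (crad K)" "K \<subseteq> cball b (crad K)" for a b
    using crad_sq_le_midpoint[OF K that] by simp
  show ?thesis unfolding zc_def
    by (rule theI[of _ x]) (use x unique in auto)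
qed

lemma infdist_le_hdist:
  fixes K L :: "'a::euclidean_space set"
  assumes K: "K \<in> Cd" and L: "L \<in> Cd" and y: "y \<in> L"
  shows "infdist y K \<le> hdist K L"
proof -
  have "compact ((\<lambda>y. infdist y K) ` L)"
    using L unfolding Cd_def by (auto intro!: compact_continuous_image continuous_intros)
  then have "bdd_above ((\<lambda>y. infdist y K) ` L)"
    by (auto intro: bounded_imp_bdd_above compact_imp_bounded)
  then have "infdist y K \<le> (SUP y\<in>L. infdist y K)" using y by (rule cSUP_upper2) simp
  then show ?thesis unfolding hdist_def by simp
qed

lemma hdist_nonneg:
  fixes K L :: "'a::euclidean_space set"
  assumes K: "K \<in> Cd" and L: "L \<in> Cd"
  shows "0 \<le> hdist K L"
proof -
  obtain y where "y \<in> L" using L unfolding Cd_def by auto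
  then show ?thesis using infdist_le_hdist[OF K L, of y] infdist_nonneg[of y K] by linarith
qed

lemma hdist_commute: "hdist K L = hdist L K"
  unfolding hdist_def by simp

lemma subset_cball_hdist:
  fixes K L :: "'a::euclidean_space set"
  assumes K: "K \<in> Cd" and L: "L \<in> Cd" and sub: "K \<subseteq> cball z r"
  shows "L \<subseteq> cball z (r + hdist K L)"
proof
  fix y assume y: "y \<in> L"
  have "closed K" "K \<noteq> {}" using K unfolding Cd_def by (auto intro: compact_imp_closed)
  then obtain x where "x \<in> K" "infdist y K = dist y x" using infdist_attains_inf by blast
  then have "x \<in> K" "dist y x \<le> hdist K L" using infdist_le_hdist[OF K L y] by auto
  moreover have "dist z x \<le> r" using sub \<open>x \<in> K\<close> by auto
  ultimately show "y \<in> cball z (r + hdist K L)"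
    using dist_triangle[of z y x] by (auto simp: dist_commute)
qed

lemma dist_zc_sq_le:
  fixes K L :: "'a::euclidean_space set"
  assumes K: "K \<in> Cd" and L: "L \<in> Cd"
  shows "dist (zc K) (zc L) ^ 2 \<le> 8 * hdist K L * (crad K + hdist K L)"
proof -
  let ?h = "hdist K L" and ?r = "crad K"
  have "L \<subseteq> cball (zc K) (?r + ?h)" using subset_cball_hdist[OF K L subset_cball_zc[OF K]] .
  then have rL: "crad L \<le> ?r + ?h" using crad_le L unfolding Cd_def by blast
  have "K \<subseteq> cball (zc L) (crad L + hdist L K)"
    using subset_cball_hdist[OF L K subset_cball_zc[OF L]] .
  also have "\<dots> \<subseteq> cball (zc L) (?r + 2 * ?h)"
    using rL by (intro subset_cball) (simp add: hdist_commute)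
  finally have "?r ^ 2 \<le> (?r^2 + (?r + 2 * ?h)^2) / 2 - dist (zc K) (zc L) ^ 2 / 4"
    by (rule crad_sq_le_midpoint[OF K subset_cball_zc[OF K]])
  then show ?thesis by (simp add: power2_eq_square field_simps)
qed

lemma zc_continuous_hdist:
  fixes K :: "'a::euclidean_space set"
  assumes K: "K \<in> Cd" and e: "e > 0"
  shows "\<exists>d>0. \<forall>L\<in>Cd. hdist K L < d \<longrightarrow> dist (zc K) (zc L) < e"
proof -
  let ?r = "crad K"
  have r0: "0 \<le> ?r" using crad_nonneg[OF K] .
  define d where "d = min 1 (e^2 / (8 * (?r + 1)))"
  have "dist (zc K) (zc L) < e" if L: "L \<in> Cd" and h: "hdist K L < d" for L
  proof -
    let ?h = "hdist K L"
    have h0: "0 \<le> ?h" using hdist_nonneg[OF K L] .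
    have "dist (zc K) (zc L) ^ 2 \<le> 8 * ?h * (?r + ?h)" using dist_zc_sq_le[OF K L] .
    also have "\<dots> \<le> 8 * ?h * (?r + 1)" using h0 h unfolding d_def by (intro mult_left_mono) auto
    also have "\<dots> < e^2" using h r0 unfolding d_def by (simp add: field_simps)
    finally show ?thesis using e by (simp add: power_less_imp_less_base)
  qed
  moreover have "d > 0" unfolding d_def using e r0 by auto
  ultimately show ?thesis by blast
qed

lemma space_Cmeas: "space Cmeas = Cd"
  unfolding Cmeas_def by (rule space_measure_of) auto

lemma measurable_zc: "(zc :: 'a::euclidean_space set \<Rightarrow> 'a) \<in> borel_measurable Cmeas"
proof (rule borel_measurableI)
  fix U :: "'a set" assume U: "open U"
  let ?G = "{U. U \<subseteq> (Cd :: 'a set set) \<and> (\<forall>K\<in>U. \<exists>e>0. \<forall>L\<in>Cd. hdist K L < e \<longrightarrow> L \<in> U)}"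
  have "zc -` U \<inter> Cd \<in> ?G"
  proof safe
    fix K :: "'a set" assume K: "K \<in> Cd" "zc K \<in> U"
    then obtain e where e: "e > 0" "ball (zc K) e \<subseteq> U" using U openE by blast
    obtain d where d: "d > 0" "\<forall>L\<in>Cd. hdist K L < d \<longrightarrow> dist (zc K) (zc L) < e"
      using zc_continuous_hdist[OF K(1) e(1)] by blast
    show "\<exists>e>0. \<forall>L\<in>Cd. hdist K L < e \<longrightarrow> L \<in> zc -` U \<inter> Cd"
      using d e by (intro exI[of _ d]) auto
  qed
  then have "zc -` U \<inter> Cd \<in> sigma_sets Cd ?G" by blast
  then show "zc -` U \<inter> space Cmeas \<in> sets Cmeas"
    unfolding space_Cmeas unfolding Cmeas_def by (subst sets_measure_of) auto
qed

lemma Bb_subset_sets_Cmeas: "Bb \<subseteq> sets Cmeas"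
proof
  fix \<Psi> assume "\<Psi> \<in> Bb"
  then obtain B where B: "B \<in> sets borel" "\<Psi> = {K\<in>Cd. zc K \<in> B}" unfolding Bb_def by auto
  have "\<Psi> = zc -` B \<inter> space Cmeas" using B(2) space_Cmeas by auto
  then show "\<Psi> \<in> sets Cmeas" using measurable_sets[OF measurable_zc B(1)] by simp
qed

lemma space_Nmeas: "space Nmeas = Nspace"
  unfolding Nmeas_def by (rule space_measure_of) auto

lemma measurable_cnt: "B \<in> sets Cmeas \<Longrightarrow> (\<lambda>S. cnt S B) \<in> borel_measurable Nmeas"
proof -
  assume B: "B \<in> sets Cmeas"
  let ?A = "insert (\<infinity>::ennreal) (range of_nat)"
  have range: "cnt S B \<in> ?A" for S unfolding cnt_def by auto
  have level_sets: "{S\<in>Nspace. cnt S B = of_nat k} \<in> sets Nmeas" for k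
    using B unfolding Nmeas_def by (subst sets_measure_of) auto
  have "countable ?A" by simp
  have "(\<lambda>S. cnt S B) \<in> measurable Nmeas (count_space ?A)"
    unfolding measurable_count_space_eq_countable[OF \<open>countable ?A\<close>]
  proof (intro conjI ballI)
    show "(\<lambda>S. cnt S B) \<in> space Nmeas \<rightarrow> ?A" using range by blast
  next
    fix a assume a: "a \<in> ?A"
    show "(\<lambda>S. cnt S B) -` {a} \<inter> space Nmeas \<in> sets Nmeas"
    proof (cases "a = \<infinity>")
      case True
      have "(\<lambda>S. cnt S B) -` {\<infinity>} \<inter> space Nmeas
          = space Nmeas - (\<Union>k. {S\<in>Nspace. cnt S B = of_nat k})"
        unfolding space_Nmeas using range by fastforce
      also have "\<dots> \<in> sets Nmeas" using level_sets by auto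
      finally show ?thesis using True by simp
    next
      case False
      then obtain k where "a = of_nat k" using a by auto
      moreover have "(\<lambda>S. cnt S B) -` {of_nat k} \<inter> space Nmeas = {S\<in>Nspace. cnt S B = of_nat k}"
        unfolding space_Nmeas by auto
      ultimately show ?thesis using level_sets by simp
    qed
  qed
  then show ?thesis
    using measurable_compose[OF _ borel_measurable_count_space[of "\<lambda>x. x"]] by blast
qed

lemma sets_muQ: "sets (muQ Q) = sets Cmeas"
proof -
  have "sets Cmeas \<subseteq> Pow Cd" using sets.sets_into_space[of _ Cmeas] space_Cmeas by auto
  then have "sets (muQ Q) = sigma_sets Cd (sets Cmeas)"
    unfolding muQ_def by (rule sets_measure_of)
  also have "\<dots> = sets Cmeas" by (metis sets.sigma_sets_eq space_Cmeas)
  finally show ?thesis .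
qed

lemma space_muQ: "space (muQ Q) = Cd"
  unfolding muQ_def
  by (subst space_measure_of) (use sets.sets_into_space[of _ Cmeas] space_Cmeas in auto)

lemma cnt_mult_prod_eq_nn_integral_count_space:
  assumes "\<forall>i\<in>I. \<Psi> i \<inter> A = {}"
  shows "cnt X A * (\<Prod>i\<in>I. cnt X (\<Psi> i))
    = (\<integral>\<^sup>+K. indicator A K * (\<Prod>i\<in>I. cnt (X - {K}) (\<Psi> i)) \<partial>count_space X)"
proof -
  have "(\<integral>\<^sup>+K. indicator A K * (\<Prod>i\<in>I. cnt (X - {K}) (\<Psi> i)) \<partial>count_space X)
      = (\<integral>\<^sup>+K. (\<Prod>i\<in>I. cnt X (\<Psi> i)) * indicator A K \<partial>count_space X)"
  proof (rule nn_integral_cong)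
    fix K
    have "cnt (X - {K}) (\<Psi> i) = cnt X (\<Psi> i)" if "K \<in> A" "i \<in> I" for i
    proof -
      have "(X - {K}) \<inter> \<Psi> i = X \<inter> \<Psi> i" using assms that by auto
      then show ?thesis unfolding cnt_def by simp
    qed
    then show "indicator A K * (\<Prod>i\<in>I. cnt (X - {K}) (\<Psi> i))
        = (\<Prod>i\<in>I. cnt X (\<Psi> i)) * indicator A K"
      by (cases "K \<in> A") auto
  qed
  also have "\<dots> = (\<Prod>i\<in>I. cnt X (\<Psi> i)) * emeasure (count_space X) (A \<inter> X)"
    by (subst nn_integral_cmult) (auto simp: nn_integral_indicator')
  also have "emeasure (count_space X) (A \<inter> X) = cnt X A"
    unfolding cnt_def by (subst emeasure_count_space) (auto simp: Int_commute)
  finally show ?thesis by (simp add: mult.commute)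
qed

lemma gibbs_nn_integral_count_space_le:
  fixes \<Xi> :: "'w \<Rightarrow> 'a::euclidean_space set set"
  assumes G: "admissible_gibbs M \<Xi> lam \<phi> R\<phi> R Q"
    and A: "A \<in> sets Cmeas" and h: "h \<in> borel_measurable Nmeas"
  shows "(\<integral>\<^sup>+\<omega>. (\<integral>\<^sup>+K. indicator A K * h (\<Xi> \<omega> - {K}) \<partial>count_space (\<Xi> \<omega>)) \<partial>M)
    \<le> ennreal lam * emeasure (muQ Q) A * (\<integral>\<^sup>+\<omega>. h (\<Xi> \<omega>) \<partial>M)"
proof -
  have \<Xi>: "\<Xi> \<in> measurable M Nmeas" and \<kappa>: "\<forall>K\<in>Cd. \<forall>S\<in>Nspace. kappa \<phi> K S \<le> 1"
    and GNZ: "\<And>f. f \<in> borel_measurable (Cmeas \<Otimes>\<^sub>M Nmeas) \<Longrightarrow>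
      (\<integral>\<^sup>+\<omega>. (\<integral>\<^sup>+K. f (K, \<Xi> \<omega> - {K}) \<partial>count_space (\<Xi> \<omega>)) \<partial>M)
        = ennreal lam * (\<integral>\<^sup>+\<omega>. (\<integral>\<^sup>+K. f (K, \<Xi> \<omega>) * kappa \<phi> K (\<Xi> \<omega>) \<partial>muQ Q) \<partial>M)"
    using G unfolding admissible_gibbs_def particle_process_def by auto
  have kappa_le: "(\<integral>\<^sup>+K. indicator A K * h (\<Xi> \<omega>) * kappa \<phi> K (\<Xi> \<omega>) \<partial>muQ Q)
      \<le> emeasure (muQ Q) A * h (\<Xi> \<omega>)" if "\<omega> \<in> space M" for \<omega>
  proof -
    have "\<Xi> \<omega> \<in> Nspace" using measurable_space[OF \<Xi> that] space_Nmeas by metis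
    then have "(\<integral>\<^sup>+K. indicator A K * h (\<Xi> \<omega>) * kappa \<phi> K (\<Xi> \<omega>) \<partial>muQ Q)
        \<le> (\<integral>\<^sup>+K. indicator A K * h (\<Xi> \<omega>) \<partial>muQ Q)"
      using \<kappa> by (intro nn_integral_mono mult_left_le) (auto simp: space_muQ)
    also have "\<dots> = h (\<Xi> \<omega>) * emeasure (muQ Q) A"
      by (subst mult.commute, rule nn_integral_cmult_indicator) (use A sets_muQ in auto)
    finally show ?thesis by (simp add: mult.commute)
  qed
  have "(\<lambda>x. indicator A (fst x) * h (snd x)) \<in> borel_measurable (Cmeas \<Otimes>\<^sub>M Nmeas)"
    using A h by measurable
  from GNZ[OF this]
  have "(\<integral>\<^sup>+\<omega>. (\<integral>\<^sup>+K. indicator A K * h (\<Xi> \<omega> - {K}) \<partial>count_space (\<Xi> \<omega>)) \<partial>M)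
      = ennreal lam * (\<integral>\<^sup>+\<omega>. (\<integral>\<^sup>+K. indicator A K * h (\<Xi> \<omega>) * kappa \<phi> K (\<Xi> \<omega>) \<partial>muQ Q) \<partial>M)"
    by simp
  also have "\<dots> \<le> ennreal lam * (\<integral>\<^sup>+\<omega>. emeasure (muQ Q) A * h (\<Xi> \<omega>) \<partial>M)"
    by (intro mult_left_mono nn_integral_mono kappa_le) auto
  also have "\<dots> = ennreal lam * emeasure (muQ Q) A * (\<integral>\<^sup>+\<omega>. h (\<Xi> \<omega>) \<partial>M)"
    using measurable_comp[OF \<Xi> h] by (simp add: nn_integral_cmult mult.assoc comp_def)
  finally show ?thesis .
qed

lemma gibbs_moment_le:
  fixes \<Xi> :: "'w \<Rightarrow> 'a::euclidean_space set set" and \<Psi> :: "nat \<Rightarrow> 'a set set"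
  assumes G: "admissible_gibbs M \<Xi> lam \<phi> R\<phi> R Q"
    and "\<forall>i\<in>{1..p}. \<Psi> i \<in> sets Cmeas" and "disjoint_family_on \<Psi> {1..p}"
  shows "(\<integral>\<^sup>+\<omega>. (\<Prod>i\<in>{1..p}. cnt (\<Xi> \<omega>) (\<Psi> i)) \<partial>M)
           \<le> ennreal lam ^ p * (\<Prod>i\<in>{1..p}. emeasure (muQ Q) (\<Psi> i))"
  using assms(2,3)
proof (induction p)
  case 0
  then show ?case
    using G by (simp add: admissible_gibbs_def particle_process_def prob_space.emeasure_space_1)
next
  case (Suc p)
  define A where "A = \<Psi> (Suc p)"
  have A: "A \<in> sets Cmeas" and \<Psi>: "\<forall>i\<in>{1..p}. \<Psi> i \<in> sets Cmeas"
    using Suc.prems(1) unfolding A_def by auto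
  have disjoint: "\<forall>i\<in>{1..p}. \<Psi> i \<inter> A = {}"
    using Suc.prems(2) unfolding A_def disjoint_family_on_def by auto
  have "(\<lambda>S. \<Prod>i\<in>{1..p}. cnt S (\<Psi> i)) \<in> borel_measurable Nmeas"
    using \<Psi> by (intro borel_measurable_prod_ennreal measurable_cnt) auto
  note GNZ_bound = gibbs_nn_integral_count_space_le[OF G A this]
  have "(\<integral>\<^sup>+\<omega>. (\<Prod>i\<in>{1..Suc p}. cnt (\<Xi> \<omega>) (\<Psi> i)) \<partial>M)
      = (\<integral>\<^sup>+\<omega>. (\<integral>\<^sup>+K. indicator A K * (\<Prod>i\<in>{1..p}. cnt (\<Xi> \<omega> - {K}) (\<Psi> i))
          \<partial>count_space (\<Xi> \<omega>)) \<partial>M)"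
    using cnt_mult_prod_eq_nn_integral_count_space[OF disjoint]
    by (simp add: A_def mult.commute)
  also have "\<dots> \<le> ennreal lam * emeasure (muQ Q) A
      * (\<integral>\<^sup>+\<omega>. (\<Prod>i\<in>{1..p}. cnt (\<Xi> \<omega>) (\<Psi> i)) \<partial>M)"
    using GNZ_bound .
  also have "\<dots> \<le> ennreal lam * emeasure (muQ Q) A
      * (ennreal lam ^ p * (\<Prod>i\<in>{1..p}. emeasure (muQ Q) (\<Psi> i)))"
    using Suc.prems disjoint_family_on_mono[of "{1..p}" "{1..Suc p}" \<Psi>]
    by (intro mult_left_mono Suc.IH) auto
  also have "\<dots> = ennreal lam ^ Suc p * (\<Prod>i\<in>{1..Suc p}. emeasure (muQ Q) (\<Psi> i))"
    unfolding A_def by (simp add: ac_simps)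
  finally show ?case .
qed

theorem lemma3p8:
  fixes M :: "'w measure" and \<Xi> :: "'w \<Rightarrow> 'a::euclidean_space set set"
    and lam R\<phi> R :: real and \<phi> :: "nat \<Rightarrow> 'a set list \<Rightarrow> ereal" and Q :: "'a set measure"
    and p :: nat and \<Psi> :: "nat \<Rightarrow> 'a set set"
  assumes "admissible_gibbs M \<Xi> lam \<phi> R\<phi> R Q"
    and "ereal lam < lambda_c Q"
    and "p \<ge> 1"
    and "\<forall>i\<in>{1..p}. \<Psi> i \<in> Bb"
    and "disjoint_family_on \<Psi> {1..p}"
  shows "(\<integral>\<^sup>+\<omega>. (\<Prod>i\<in>{1..p}. cnt (\<Xi> \<omega>) (\<Psi> i)) \<partial>M)
           \<le> ennreal lam ^ p * (\<Prod>i\<in>{1..p}. emeasure (muQ Q) (\<Psi> i))"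
  using gibbs_moment_le[OF assms(1) _ assms(5)] assms(4) Bb_subset_sets_Cmeas by blast

end
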